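(* Let $r\ge 2$, $n\ge 1$, $k\ge 1$ be integers and $s:[n]\to\{0,1,\dots,r-1\}$. Let $\mathrm{Supp}(s)=\{i\in[n]: s(i)>0\}$ and let $I\subseteq\mathrm{Supp}(s)$ with $|I|\ge k$. Let $C^I$ be the subcomplex of $C_s(n,k,\dots,k)$ ($k$ repeated $r$ times) induced on the vertices $(A_1,\dots,A_r)$ with $I\subseteq A_1$. Define $s'(i)=s(i)-1$ for $i\in I$ and $s'(i)=s(i)$ for $i\notin I$. Then $C^I$ is homotopy equivalent to $C_{s'}(n,k,\dots,k)$ with $k$ repeated $r-1$ times.
   Context: For $m\ge 1$, $t:[n]\to\{0,\dots,m\}$ and integers $k_1,\dots,k_m\ge 0$, the complex $C_t(n,k_1,\dots,k_m)$ has as vertices the $m$-tuples $(A_1,\dots,A_m)$ of subsets of $[n]$ with $|A_j|\ge k_j$ for all $j$ such that each $x\in[n]$ lies in exactly $t(x)$ of the $A_j$; a set of vertices $\{(A_1^i,\dots,A_m^i)\}_{i\in I}$ is a face iff $|\bigcap_{i\in I}A_j^i|\ge k_j$ for all $j$. Homotopy equivalence refers to geometric realizations. *)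

theory Defs
  imports "HOL-Analysis.Analysis"
begin

(* Abstract simplicial complexes are given as sets of faces (finite nonempty vertex sets).
   Geometric realization: barycentric-coordinate functions whose support is a face,
   with the product (pointwise) topology on 'v => real. *)
definition realization :: "'v set set \<Rightarrow> ('v \<Rightarrow> real) set" where
  "realization K = {f. (\<forall>v. 0 \<le> f v) \<and> {v. f v \<noteq> 0} \<in> K \<and> sum f {v. f v \<noteq> 0} = 1}"

definition geom_real :: "'v set set \<Rightarrow> ('v \<Rightarrow> real) topology" where
  "geom_real K = subtopology (powertop_real UNIV) (realization K)"

(* A vertex (A_1,...,A_m) is the list [A_1,...,A_m]; [n] = {1..n}; ks = [k_1,...,k_m]. *)
definition C_vertices :: "nat \<Rightarrow> (nat \<Rightarrow> nat) \<Rightarrow> nat \<Rightarrow> nat list \<Rightarrow> nat set list set" where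
  "C_vertices m t n ks = {As. length As = m \<and>
      (\<forall>j<m. As ! j \<subseteq> {1..n} \<and> ks ! j \<le> card (As ! j)) \<and>
      (\<forall>x\<in>{1..n}. card {j. j < m \<and> x \<in> As ! j} = t x)}"

definition C_complex :: "nat \<Rightarrow> (nat \<Rightarrow> nat) \<Rightarrow> nat \<Rightarrow> nat list \<Rightarrow> nat set list set set" where
  "C_complex m t n ks = {F. finite F \<and> F \<noteq> {} \<and> F \<subseteq> C_vertices m t n ks \<and>
      (\<forall>j<m. ks ! j \<le> card (\<Inter>As\<in>F. As ! j))}"

definition induced_subcomplex :: "'v set set \<Rightarrow> 'v set \<Rightarrow> 'v set set" where
  "induced_subcomplex K W = {F \<in> K. F \<subseteq> W}"

end

(* Let f send a vertex (A_1, ..., A_r) of C^I to (A_2', ..., A_r'), where each x in A_1 - I is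
   added to the first A_j, j >= 2, not containing it (there is one, since x lies in at most r - 1 of
   the sets), and let g send (B_1, ..., B_(r-1)) to (I, B_1, ..., B_(r-1)). Both are simplicial:
   f only enlarges A_2, ..., A_r, and g puts I, of size at least k, in front. Moreover f o g = id,
   and g(f(F)) u F is a face for every face F of C^I, since all first coordinates contain I and the
   other coordinates only grow. Hence the straight-line homotopy from |g| o |f| to the identity
   stays inside |C^I|, and |f|, |g| are inverse homotopy equivalences. *)

theory Submission
  imports Defs
begin

lemma topspace_geom_real [simp]: "topspace (geom_real K) = realization K"
  by (simp add: geom_real_def)

lemma continuous_map_geom_real_coordinate:
  "continuous_map (geom_real K) euclideanreal (\<lambda>\<phi>. \<phi> v)"
  unfolding geom_real_def
  by (intro continuous_map_from_subtopology continuous_map_product_projection) auto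

lemma continuous_map_into_geom_real:
  "continuous_map X (geom_real K) p \<longleftrightarrow>
     (\<forall>v. continuous_map X euclideanreal (\<lambda>x. p x v)) \<and> p \<in> topspace X \<rightarrow> realization K"
  by (simp add: geom_real_def continuous_map_in_subtopology continuous_map_componentwise_UNIV)

lemma convex_combination_in_realization:
  assumes fin: "\<forall>\<sigma>\<in>K. finite \<sigma>" and \<phi>: "\<phi> \<in> realization K" and \<psi>: "\<psi> \<in> realization K"
    and face: "{v. \<phi> v \<noteq> 0} \<union> {v. \<psi> v \<noteq> 0} \<in> K" and t: "0 \<le> t" "t \<le> 1"
  shows "(\<lambda>v. (1 - t) * \<phi> v + t * \<psi> v) \<in> realization K"
proof -
  define U where "U = {v. \<phi> v \<noteq> 0} \<union> {v. \<psi> v \<noteq> 0}"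
  define \<mu> where "\<mu> = (\<lambda>v. (1 - t) * \<phi> v + t * \<psi> v)"
  have nonneg: "0 \<le> \<phi> v" "0 \<le> \<psi> v" for v
    using \<phi> \<psi> by (auto simp: realization_def)
  have "finite U" using fin face unfolding U_def by blast
  have sum_U: "sum \<phi> U = 1" "sum \<psi> U = 1"
  proof -
    have "sum \<phi> U = sum \<phi> {v. \<phi> v \<noteq> 0}" "sum \<psi> U = sum \<psi> {v. \<psi> v \<noteq> 0}"
      using \<open>finite U\<close> by (intro sum.mono_neutral_right; auto simp: U_def)+
    then show "sum \<phi> U = 1" "sum \<psi> U = 1"
      using \<phi> \<psi> by (simp_all add: realization_def)
  qed
  have "\<mu> v \<noteq> 0 \<longleftrightarrow> (t < 1 \<and> \<phi> v \<noteq> 0) \<or> (0 < t \<and> \<psi> v \<noteq> 0)" for v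
  proof -
    have "0 \<le> (1 - t) * \<phi> v" "0 \<le> t * \<psi> v"
      using t nonneg[of v] by simp_all
    then have "\<mu> v = 0 \<longleftrightarrow> (1 - t) * \<phi> v = 0 \<and> t * \<psi> v = 0"
      unfolding \<mu>_def by linarith
    then show ?thesis using t by auto
  qed
  \<comment> \<open>\<open>K\<close> need not be closed under subsets, so the endpoints are treated separately.\<close>
  then have supp: "{v. \<mu> v \<noteq> 0} =
      (if t = 0 then {v. \<phi> v \<noteq> 0} else if t = 1 then {v. \<psi> v \<noteq> 0} else U)"
    using t by (auto simp: U_def)
  have "{v. \<mu> v \<noteq> 0} \<in> K"
    using supp \<phi> \<psi> face by (simp add: realization_def U_def)
  moreover have "sum \<mu> {v. \<mu> v \<noteq> 0} = 1"
  proof -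
    have "sum \<mu> {v. \<mu> v \<noteq> 0} = sum \<mu> U"
      using \<open>finite U\<close> supp by (intro sum.mono_neutral_left) (auto simp: U_def)
    also have "\<dots> = (1 - t) * sum \<phi> U + t * sum \<psi> U"
      by (simp add: \<mu>_def sum.distrib sum_distrib_left)
    finally show ?thesis using sum_U by simp
  qed
  moreover have "0 \<le> \<mu> v" for v
    using t nonneg by (simp add: \<mu>_def)
  ultimately show ?thesis by (simp add: realization_def \<mu>_def)
qed

lemma homotopic_with_geom_real_straight_line:
  assumes fin: "\<forall>\<sigma>\<in>K. finite \<sigma>"
    and p: "continuous_map X (geom_real K) p" and q: "continuous_map X (geom_real K) q"
    and face: "\<And>x. x \<in> topspace X \<Longrightarrow> {v. p x v \<noteq> 0} \<union> {v. q x v \<noteq> 0} \<in> K"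
  shows "homotopic_with (\<lambda>_. True) X (geom_real K) p q"
  unfolding homotopic_with_def
proof (intro exI conjI allI ballI)
  define H where "H = (\<lambda>(t::real, x) v. (1 - t) * p x v + t * q x v)"
  show "H (0, x) = p x" "H (1, x) = q x" for x
    by (simp_all add: H_def)
  have "continuous_map (prod_topology (top_of_set {0..1}) X) euclideanreal (\<lambda>z. H z v)" for v
  proof -
    have "continuous_map X euclideanreal (\<lambda>x. p x v)" "continuous_map X euclideanreal (\<lambda>x. q x v)"
      using p q by (simp_all add: continuous_map_into_geom_real)
    moreover have "continuous_map (prod_topology (top_of_set {0..1}) X) euclideanreal fst"
      using continuous_map_compose[OF continuous_map_fst continuous_map_from_subtopology[OF continuous_map_id]]
      by (simp add: o_def)
    ultimately show ?thesis
      unfolding H_def case_prod_beta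
      by (intro continuous_map_add continuous_map_real_mult continuous_map_diff continuous_map_const[THEN iffD2]
          continuous_map_compose[OF continuous_map_snd, unfolded o_def]) auto
  qed
  moreover have "H z \<in> realization K" if "z \<in> topspace (prod_topology (top_of_set {0..1}) X)" for z
  proof -
    obtain t x where z: "z = (t, x)"
      by fastforce
    with that have t: "0 \<le> t" "t \<le> 1" and x: "x \<in> topspace X"
      by auto
    have "p x \<in> realization K" "q x \<in> realization K"
      using p q x by (auto simp: continuous_map_into_geom_real)
    then show ?thesis
      using convex_combination_in_realization[OF fin _ _ face[OF x] t] by (simp add: H_def z)
  qed
  ultimately show "continuous_map (prod_topology (top_of_set {0..1}) X) (geom_real K) H"
    by (auto simp: continuous_map_into_geom_real)
qed (rule TrueI)

definition realize_map :: "('a \<Rightarrow> 'b) \<Rightarrow> ('a \<Rightarrow> real) \<Rightarrow> 'b \<Rightarrow> real" where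
  "realize_map h \<phi> = (\<lambda>w. sum \<phi> {v. \<phi> v \<noteq> 0 \<and> h v = w})"

lemma realize_map_in_realization:
  assumes \<phi>: "\<phi> \<in> realization K" and fin: "\<forall>\<sigma>\<in>K. finite \<sigma>" and h: "\<forall>\<sigma>\<in>K. h ` \<sigma> \<in> L"
  shows "realize_map h \<phi> \<in> realization L"
    and "{w. realize_map h \<phi> w \<noteq> 0} = h ` {v. \<phi> v \<noteq> 0}"
proof -
  define S where "S = {v. \<phi> v \<noteq> 0}"
  have "S \<in> K" and nonneg: "\<And>v. 0 \<le> \<phi> v" and "sum \<phi> S = 1"
    using \<phi> by (auto simp: realization_def S_def)
  have "finite S" using fin \<open>S \<in> K\<close> by blast
  have pos: "\<And>v. v \<in> S \<Longrightarrow> 0 < \<phi> v"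
    using nonneg by (force simp: S_def order_le_less)
  have fibre: "realize_map h \<phi> w = sum \<phi> {v\<in>S. h v = w}" for w
    by (simp add: realize_map_def S_def)
  have supp: "{w. realize_map h \<phi> w \<noteq> 0} = h ` S"
  proof (intro set_eqI iffI)
    fix w assume "w \<in> {w. realize_map h \<phi> w \<noteq> 0}"
    then have "sum \<phi> {v\<in>S. h v = w} \<noteq> 0" by (simp add: fibre)
    then have "{v\<in>S. h v = w} \<noteq> {}" by (metis sum.empty)
    then show "w \<in> h ` S" by blast
  next
    fix w assume "w \<in> h ` S"
    then have "0 < sum \<phi> {v\<in>S. h v = w}"
      using \<open>finite S\<close> pos by (intro sum_pos) auto
    then show "w \<in> {w. realize_map h \<phi> w \<noteq> 0}" by (simp add: fibre)
  qed
  then show "{w. realize_map h \<phi> w \<noteq> 0} = h ` {v. \<phi> v \<noteq> 0}"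
    by (simp add: S_def)
  have "sum (realize_map h \<phi>) (h ` S) = sum \<phi> S"
    using sum.image_gen[OF \<open>finite S\<close>, of \<phi> h] by (simp add: fibre)
  then have "sum (realize_map h \<phi>) {w. realize_map h \<phi> w \<noteq> 0} = 1"
    using supp \<open>sum \<phi> S = 1\<close> by simp
  moreover have "{w. realize_map h \<phi> w \<noteq> 0} \<in> L"
    using supp \<open>S \<in> K\<close> h by simp
  moreover have "0 \<le> realize_map h \<phi> w" for w
    using nonneg by (simp add: fibre sum_nonneg)
  ultimately show "realize_map h \<phi> \<in> realization L"
    by (simp add: realization_def)
qed

lemma continuous_map_realize_map:
  assumes "finite V" and KV: "\<forall>\<sigma>\<in>K. \<sigma> \<subseteq> V" and h: "\<forall>\<sigma>\<in>K. h ` \<sigma> \<in> L"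
  shows "continuous_map (geom_real K) (geom_real L) (realize_map h)"
  unfolding continuous_map_into_geom_real
proof (intro conjI allI Pi_I)
  have "\<forall>\<sigma>\<in>K. finite \<sigma>"
    using KV \<open>finite V\<close> finite_subset by blast
  then show "realize_map h \<phi> \<in> realization L" if "\<phi> \<in> topspace (geom_real K)" for \<phi>
    using realize_map_in_realization(1)[of \<phi> K h L] that h by simp
  fix w
  show "continuous_map (geom_real K) euclideanreal (\<lambda>\<phi>. realize_map h \<phi> w)"
  proof (rule continuous_map_eq)
    show "continuous_map (geom_real K) euclideanreal (\<lambda>\<phi>. sum (\<lambda>v. \<phi> v) {v\<in>V. h v = w})"
      by (intro continuous_map_sum continuous_map_geom_real_coordinate) (simp add: \<open>finite V\<close>)
    fix \<phi> assume "\<phi> \<in> topspace (geom_real K)"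
    then have "{v. \<phi> v \<noteq> 0} \<subseteq> V" using KV by (auto simp: realization_def)
    then show "sum (\<lambda>v. \<phi> v) {v\<in>V. h v = w} = realize_map h \<phi> w"
      unfolding realize_map_def using \<open>finite V\<close> by (intro sum.mono_neutral_right) auto
  qed
qed

lemma homotopy_equivalent_space_geom_real_contiguous:
  assumes "finite V" and KV: "\<forall>\<sigma>\<in>K. \<sigma> \<subseteq> V"
    and "finite W" and LW: "\<forall>\<tau>\<in>L. \<tau> \<subseteq> W"
    and f: "\<forall>\<sigma>\<in>K. f ` \<sigma> \<in> L" and g: "\<forall>\<tau>\<in>L. g ` \<tau> \<in> K"
    and fg: "\<forall>\<tau>\<in>L. \<forall>w\<in>\<tau>. f (g w) = w"
    and gf_contiguous: "\<forall>\<sigma>\<in>K. g ` f ` \<sigma> \<union> \<sigma> \<in> K"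
  shows "geom_real K homotopy_equivalent_space geom_real L"
proof -
  have finK: "\<forall>\<sigma>\<in>K. finite \<sigma>"
    using KV \<open>finite V\<close> finite_subset by blast
  have finL: "\<forall>\<tau>\<in>L. finite \<tau>"
    using LW \<open>finite W\<close> finite_subset by blast
  have F: "continuous_map (geom_real K) (geom_real L) (realize_map f)"
    using continuous_map_realize_map[OF \<open>finite V\<close> KV f] .
  have G: "continuous_map (geom_real L) (geom_real K) (realize_map g)"
    using continuous_map_realize_map[OF \<open>finite W\<close> LW g] .
  have supp_gf: "{v. (realize_map g \<circ> realize_map f) \<phi> v \<noteq> 0} = g ` f ` {v. \<phi> v \<noteq> 0}"
    if "\<phi> \<in> realization K" for \<phi>
    using realize_map_in_realization[OF that finK f] realize_map_in_realization(2)[OF _ finL g] by simp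
  have supp_fg: "{v. (realize_map f \<circ> realize_map g) \<psi> v \<noteq> 0} = f ` g ` {v. \<psi> v \<noteq> 0}"
    if "\<psi> \<in> realization L" for \<psi>
    using realize_map_in_realization[OF that finL g] realize_map_in_realization(2)[OF _ finK f] by simp
  have "homotopic_with (\<lambda>_. True) (geom_real K) (geom_real K) (realize_map g \<circ> realize_map f) id"
  proof (intro homotopic_with_geom_real_straight_line[OF finK continuous_map_compose[OF F G]])
    fix \<phi> assume "\<phi> \<in> topspace (geom_real K)"
    then have "{v. \<phi> v \<noteq> 0} \<in> K" by (simp add: realization_def)
    then show "{v. (realize_map g \<circ> realize_map f) \<phi> v \<noteq> 0} \<union> {v. id \<phi> v \<noteq> 0} \<in> K"
      using supp_gf gf_contiguous \<open>\<phi> \<in> topspace (geom_real K)\<close> by simp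
  qed simp
  moreover have "homotopic_with (\<lambda>_. True) (geom_real L) (geom_real L) (realize_map f \<circ> realize_map g) id"
  proof (intro homotopic_with_geom_real_straight_line[OF finL continuous_map_compose[OF G F]])
    fix \<psi> assume "\<psi> \<in> topspace (geom_real L)"
    then have "{v. \<psi> v \<noteq> 0} \<in> L" by (simp add: realization_def)
    moreover have "f ` g ` {v. \<psi> v \<noteq> 0} = {v. \<psi> v \<noteq> 0}"
      using fg \<open>{v. \<psi> v \<noteq> 0} \<in> L\<close> by (force simp: image_image)
    ultimately show "{v. (realize_map f \<circ> realize_map g) \<psi> v \<noteq> 0} \<union> {v. id \<psi> v \<noteq> 0} \<in> L"
      using supp_fg \<open>\<psi> \<in> topspace (geom_real L)\<close> by simp
  qed simp
  ultimately show ?thesis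
    unfolding homotopy_equivalent_space_def using F G by blast
qed

lemma card_less_Suc_shift:
  "card {j. j < Suc m \<and> P j} = (if P 0 then 1 else 0) + card {j. j < m \<and> P (Suc j)}"
proof -
  have "{j. j < Suc m \<and> P j} = {j \<in> Collect P. j < Suc m}"
    "{j. j < m \<and> P (Suc j)} = {j. Suc j \<in> Collect P \<and> j < m}"
    by auto
  then show ?thesis
    using card_less_Suc[of "Collect P" m] card_less_Suc2[of "Collect P" m] by auto
qed

lemma finite_C_vertices: "finite (C_vertices m t n ks)"
proof (rule finite_subset)
  show "C_vertices m t n ks \<subseteq> {As. set As \<subseteq> Pow {1..n} \<and> length As = m}"
    by (fastforce simp: C_vertices_def in_set_conv_nth)
  show "finite {As. set As \<subseteq> Pow {1..n} \<and> length As = m}"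
    by (intro finite_lists_length_eq) auto
qed

lemma C_complexI:
  assumes "finite F" "F \<noteq> {}" "F \<subseteq> C_vertices m t n ks"
    and common: "\<And>j. j < m \<Longrightarrow> \<exists>S. ks ! j \<le> card S \<and> (\<forall>As\<in>F. S \<subseteq> As ! j)"
  shows "F \<in> C_complex m t n ks"
proof -
  have "ks ! j \<le> card (\<Inter>As\<in>F. As ! j)" if "j < m" for j
  proof -
    obtain S where S: "ks ! j \<le> card S" "\<forall>As\<in>F. S \<subseteq> As ! j"
      using common \<open>j < m\<close> by blast
    obtain A where "A \<in> F" using \<open>F \<noteq> {}\<close> by blast
    then have "(\<Inter>As\<in>F. As ! j) \<subseteq> {1..n}"
      using \<open>F \<subseteq> C_vertices m t n ks\<close> \<open>j < m\<close> by (force simp: C_vertices_def)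
    then have "card S \<le> card (\<Inter>As\<in>F. As ! j)"
      using S(2) by (intro card_mono) (auto intro: finite_subset)
    with S(1) show ?thesis by linarith
  qed
  with assms show ?thesis by (simp add: C_complex_def)
qed

definition first_gap :: "'a set list \<Rightarrow> 'a \<Rightarrow> nat" where
  "first_gap As x = (LEAST j. 0 < j \<and> j < length As \<and> x \<notin> As ! j)"

(* The map f of the proof idea; elements of A_1 that lie in I are dropped. *)
definition collapse_first :: "'a set \<Rightarrow> 'a set list \<Rightarrow> 'a set list" where
  "collapse_first I As =
     map (\<lambda>j. As ! Suc j \<union> {x \<in> As ! 0 - I. first_gap As x = Suc j}) [0..<length As - 1]"

lemma first_gap_is_gap:
  assumes "x \<in> As ! 0" and "card {j. j < length As \<and> x \<in> As ! j} < length As"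
  shows "0 < first_gap As x" "first_gap As x < length As" "x \<notin> As ! first_gap As x"
proof -
  have "\<exists>j. 0 < j \<and> j < length As \<and> x \<notin> As ! j"
  proof (rule ccontr)
    assume "\<not> ?thesis"
    then have "{j. j < length As \<and> x \<in> As ! j} = {..<length As}"
      using \<open>x \<in> As ! 0\<close> by (auto; metis gr0I)
    with assms(2) show False by simp
  qed
  from LeastI_ex[OF this]
  show "0 < first_gap As x" "first_gap As x < length As" "x \<notin> As ! first_gap As x"
    by (simp_all add: first_gap_def)
qed

lemma length_collapse_first [simp]: "length (collapse_first I As) = length As - 1"
  by (simp add: collapse_first_def)

lemma nth_collapse_first:
  "j < length As - 1 \<Longrightarrow>
     collapse_first I As ! j = As ! Suc j \<union> {x \<in> As ! 0 - I. first_gap As x = Suc j}"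
  by (simp add: collapse_first_def)

lemma nth_subset_nth_collapse_first:
  "j < length As - 1 \<Longrightarrow> As ! Suc j \<subseteq> collapse_first I As ! j"
  by (simp add: nth_collapse_first)

lemma collapse_first_Cons [simp]: "collapse_first I (I # Bs) = Bs"
  by (rule nth_equalityI) (auto simp: nth_collapse_first)

lemma collapse_first_in_C_vertices:
  assumes As: "As \<in> C_vertices (Suc m) t n (k # ks)" and "I \<subseteq> As ! 0"
    and t: "\<forall>x\<in>{1..n}. t x \<le> m"
  shows "collapse_first I As \<in> C_vertices m (\<lambda>x. if x \<in> I then t x - 1 else t x) n ks"
proof -
  have len: "length As = Suc m" and sub: "\<And>j. j < Suc m \<Longrightarrow> As ! j \<subseteq> {1..n}"
    and size: "\<And>j. j < Suc m \<Longrightarrow> (k # ks) ! j \<le> card (As ! j)"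
    and count: "\<And>x. x \<in> {1..n} \<Longrightarrow> card {j. j < Suc m \<and> x \<in> As ! j} = t x"
    using As by (auto simp: C_vertices_def)
  have nth: "collapse_first I As ! j = As ! Suc j \<union> {x \<in> As ! 0 - I. first_gap As x = Suc j}"
    if "j < m" for j
    using that len by (simp add: nth_collapse_first)
  have "collapse_first I As ! j \<subseteq> {1..n} \<and> ks ! j \<le> card (collapse_first I As ! j)"
    if "j < m" for j
  proof
    show "collapse_first I As ! j \<subseteq> {1..n}"
      using sub[of 0] sub[of "Suc j"] \<open>j < m\<close> by (auto simp: nth[OF \<open>j < m\<close>])
    then have "card (As ! Suc j) \<le> card (collapse_first I As ! j)"
      by (intro card_mono) (auto intro: finite_subset simp: nth[OF \<open>j < m\<close>])
    then show "ks ! j \<le> card (collapse_first I As ! j)"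
      using size[of "Suc j"] \<open>j < m\<close> by simp
  qed
  moreover have "card {j. j < m \<and> x \<in> collapse_first I As ! j} = (if x \<in> I then t x - 1 else t x)"
    if x: "x \<in> {1..n}" for x
  proof -
    let ?rest = "{j. j < m \<and> x \<in> As ! Suc j}"
    have shift: "t x = (if x \<in> As ! 0 then 1 else 0) + card ?rest"
      using count[OF x] card_less_Suc_shift[of m "\<lambda>j. x \<in> As ! j"] by simp
    show ?thesis
    proof (cases "x \<in> As ! 0 \<and> x \<notin> I")
      case False
      then have "{j. j < m \<and> x \<in> collapse_first I As ! j} = ?rest"
        by (auto simp: nth)
      then show ?thesis using shift False \<open>I \<subseteq> As ! 0\<close> by auto
    next
      case True
      define g where "g = first_gap As x"
      have "card {j. j < length As \<and> x \<in> As ! j} < length As"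
        using count[OF x] t x len by fastforce
      then have g: "0 < g" "g < Suc m" "x \<notin> As ! g"
        using first_gap_is_gap[of x As] True len by (simp_all add: g_def)
      have "{j. j < m \<and> x \<in> collapse_first I As ! j} = insert (g - 1) ?rest"
        using True g by (auto simp: nth g_def)
      moreover have "g - 1 \<notin> ?rest" using g by auto
      ultimately show ?thesis using shift True by simp
    qed
  qed
  ultimately show ?thesis
    using len by (simp add: C_vertices_def)
qed

lemma Cons_in_C_vertices:
  assumes Bs: "Bs \<in> C_vertices m (\<lambda>x. if x \<in> I then t x - 1 else t x) n ks"
    and I: "I \<subseteq> {x \<in> {1..n}. 0 < t x}" "k \<le> card I"
  shows "I # Bs \<in> C_vertices (Suc m) t n (k # ks)"
proof -
  have "card {j. j < Suc m \<and> x \<in> (I # Bs) ! j} = t x" if "x \<in> {1..n}" for x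
    using Bs I that card_less_Suc_shift[of m "\<lambda>j. x \<in> (I # Bs) ! j"]
    by (auto simp: C_vertices_def)
  moreover have "(I # Bs) ! j \<subseteq> {1..n} \<and> (k # ks) ! j \<le> card ((I # Bs) ! j)" if "j < Suc m" for j
    using Bs I that by (cases j) (auto simp: C_vertices_def)
  ultimately show ?thesis
    using Bs by (simp add: C_vertices_def)
qed

lemma collapse_first_image_in_C_complex:
  assumes \<sigma>: "\<sigma> \<in> C_complex (Suc m) t n (k # ks)" and "\<forall>As\<in>\<sigma>. I \<subseteq> As ! 0"
    and t: "\<forall>x\<in>{1..n}. t x \<le> m"
  shows "collapse_first I ` \<sigma> \<in> C_complex m (\<lambda>x. if x \<in> I then t x - 1 else t x) n ks"
proof (rule C_complexI)
  have V: "\<sigma> \<subseteq> C_vertices (Suc m) t n (k # ks)"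
    using \<sigma> by (simp add: C_complex_def)
  show "finite (collapse_first I ` \<sigma>)" "collapse_first I ` \<sigma> \<noteq> {}"
    using \<sigma> by (simp_all add: C_complex_def)
  show "collapse_first I ` \<sigma> \<subseteq> C_vertices m (\<lambda>x. if x \<in> I then t x - 1 else t x) n ks"
    using V \<open>\<forall>As\<in>\<sigma>. I \<subseteq> As ! 0\<close> collapse_first_in_C_vertices[OF _ _ t] by blast
  fix j assume "j < m"
  have "ks ! j \<le> card (\<Inter>As\<in>\<sigma>. As ! Suc j)"
    using \<sigma> \<open>j < m\<close> by (auto simp: C_complex_def)
  moreover have "(\<Inter>As\<in>\<sigma>. As ! Suc j) \<subseteq> collapse_first I As ! j" if "As \<in> \<sigma>" for As
  proof -
    have "length As = Suc m" using V that by (auto simp: C_vertices_def)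
    then show ?thesis
      using that nth_subset_nth_collapse_first[of j As I] \<open>j < m\<close> by auto
  qed
  ultimately show "\<exists>S. ks ! j \<le> card S \<and> (\<forall>B\<in>collapse_first I ` \<sigma>. S \<subseteq> B ! j)"
    by blast
qed

lemma Cons_image_in_C_complex:
  assumes \<tau>: "\<tau> \<in> C_complex m (\<lambda>x. if x \<in> I then t x - 1 else t x) n ks"
    and I: "I \<subseteq> {x \<in> {1..n}. 0 < t x}" "k \<le> card I"
  shows "(#) I ` \<tau> \<in> C_complex (Suc m) t n (k # ks)"
proof (rule C_complexI)
  show "finite ((#) I ` \<tau>)" "(#) I ` \<tau> \<noteq> {}"
    using \<tau> by (simp_all add: C_complex_def)
  show "(#) I ` \<tau> \<subseteq> C_vertices (Suc m) t n (k # ks)"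
    using \<tau> Cons_in_C_vertices[OF _ I] by (auto simp: C_complex_def)
  fix j assume "j < Suc m"
  show "\<exists>S. (k # ks) ! j \<le> card S \<and> (\<forall>B\<in>(#) I ` \<tau>. S \<subseteq> B ! j)"
  proof (cases j)
    case 0
    then show ?thesis using I by auto
  next
    case (Suc j')
    then have "ks ! j' \<le> card (\<Inter>B\<in>\<tau>. B ! j')"
      using \<tau> \<open>j < Suc m\<close> by (auto simp: C_complex_def)
    then show ?thesis
      using Suc by (intro exI[of _ "\<Inter>B\<in>\<tau>. B ! j'"]) auto
  qed
qed

lemma Cons_collapse_first_contiguous:
  assumes \<sigma>: "\<sigma> \<in> C_complex (Suc m) t n (k # ks)" and "\<forall>As\<in>\<sigma>. I \<subseteq> As ! 0"
    and t: "\<forall>x\<in>{1..n}. t x \<le> m" and I: "I \<subseteq> {x \<in> {1..n}. 0 < t x}" "k \<le> card I"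
  shows "(#) I ` collapse_first I ` \<sigma> \<union> \<sigma> \<in> C_complex (Suc m) t n (k # ks)"
proof (rule C_complexI)
  have V: "\<sigma> \<subseteq> C_vertices (Suc m) t n (k # ks)"
    using \<sigma> by (simp add: C_complex_def)
  show "finite ((#) I ` collapse_first I ` \<sigma> \<union> \<sigma>)" "(#) I ` collapse_first I ` \<sigma> \<union> \<sigma> \<noteq> {}"
    using \<sigma> by (simp_all add: C_complex_def)
  show "(#) I ` collapse_first I ` \<sigma> \<union> \<sigma> \<subseteq> C_vertices (Suc m) t n (k # ks)"
    using V \<open>\<forall>As\<in>\<sigma>. I \<subseteq> As ! 0\<close> Cons_in_C_vertices[OF collapse_first_in_C_vertices[OF _ _ t] I]
    by blast
  fix j assume "j < Suc m"
  show "\<exists>S. (k # ks) ! j \<le> card S \<and> (\<forall>B\<in>(#) I ` collapse_first I ` \<sigma> \<union> \<sigma>. S \<subseteq> B ! j)"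
  proof (cases j)
    case 0
    then show ?thesis
      using I \<open>\<forall>As\<in>\<sigma>. I \<subseteq> As ! 0\<close> by (intro exI[of _ I]) auto
  next
    case (Suc j')
    have "(\<Inter>As\<in>\<sigma>. As ! Suc j') \<subseteq> B ! j" if "B \<in> (#) I ` collapse_first I ` \<sigma> \<union> \<sigma>" for B
      using that
    proof
      assume "B \<in> (#) I ` collapse_first I ` \<sigma>"
      then obtain As where "As \<in> \<sigma>" "B = I # collapse_first I As" by blast
      moreover have "length As = Suc m" using V \<open>As \<in> \<sigma>\<close> by (auto simp: C_vertices_def)
      ultimately show ?thesis
        using nth_subset_nth_collapse_first[of j' As I] Suc \<open>j < Suc m\<close> by auto
    qed (auto simp: Suc)
    moreover have "(k # ks) ! j \<le> card (\<Inter>As\<in>\<sigma>. As ! Suc j')"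
      using \<sigma> \<open>j < Suc m\<close> Suc by (auto simp: C_complex_def)
    ultimately show ?thesis
      by (intro exI[of _ "\<Inter>As\<in>\<sigma>. As ! Suc j'"]) blast
  qed
qed

lemma homotopy_equivalent_space_C_complex_first_contains:
  assumes t: "\<forall>x\<in>{1..n}. t x \<le> m" and I: "I \<subseteq> {x \<in> {1..n}. 0 < t x}" "k \<le> card I"
  shows "geom_real (induced_subcomplex (C_complex (Suc m) t n (k # ks))
             {As \<in> C_vertices (Suc m) t n (k # ks). I \<subseteq> As ! 0})
         homotopy_equivalent_space
         geom_real (C_complex m (\<lambda>x. if x \<in> I then t x - 1 else t x) n ks)"
proof (rule homotopy_equivalent_space_geom_real_contiguous[where f = "collapse_first I" and g = "(#) I"])
  let ?V = "{As \<in> C_vertices (Suc m) t n (k # ks). I \<subseteq> As ! 0}"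
  let ?K = "induced_subcomplex (C_complex (Suc m) t n (k # ks)) ?V"
  let ?L = "C_complex m (\<lambda>x. if x \<in> I then t x - 1 else t x) n ks"
  have K: "\<sigma> \<in> ?K \<longleftrightarrow> \<sigma> \<in> C_complex (Suc m) t n (k # ks) \<and> (\<forall>As\<in>\<sigma>. I \<subseteq> As ! 0)" for \<sigma>
    by (auto simp: induced_subcomplex_def C_complex_def)
  show "finite ?V" "finite (C_vertices m (\<lambda>x. if x \<in> I then t x - 1 else t x) n ks)"
    by (simp_all add: finite_C_vertices)
  show "\<forall>\<sigma>\<in>?K. \<sigma> \<subseteq> ?V" by (auto simp: induced_subcomplex_def)
  show "\<forall>\<tau>\<in>?L. \<tau> \<subseteq> C_vertices m (\<lambda>x. if x \<in> I then t x - 1 else t x) n ks"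
    by (auto simp: C_complex_def)
  show "\<forall>\<sigma>\<in>?K. collapse_first I ` \<sigma> \<in> ?L"
    using collapse_first_image_in_C_complex[OF _ _ t] by (auto simp: K)
  show "\<forall>\<tau>\<in>?L. (#) I ` \<tau> \<in> ?K"
    using Cons_image_in_C_complex[OF _ I] by (auto simp: K)
  show "\<forall>\<tau>\<in>?L. \<forall>Bs\<in>\<tau>. collapse_first I (I # Bs) = Bs"
    by simp
  show "\<forall>\<sigma>\<in>?K. (#) I ` collapse_first I ` \<sigma> \<union> \<sigma> \<in> ?K"
  proof
    fix \<sigma> assume "\<sigma> \<in> ?K"
    then have "\<sigma> \<in> C_complex (Suc m) t n (k # ks)" and I_first: "\<forall>As\<in>\<sigma>. I \<subseteq> As ! 0"
      by (simp_all add: K)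
    then have "(#) I ` collapse_first I ` \<sigma> \<union> \<sigma> \<in> C_complex (Suc m) t n (k # ks)"
      by (rule Cons_collapse_first_contiguous[OF _ _ t I])
    moreover have "\<forall>As\<in>(#) I ` collapse_first I ` \<sigma> \<union> \<sigma>. I \<subseteq> As ! 0"
      using I_first by auto
    ultimately show "(#) I ` collapse_first I ` \<sigma> \<union> \<sigma> \<in> ?K"
      by (simp only: K)
  qed
qed

theorem mainTheorem7:
  fixes r n k :: nat and s :: "nat \<Rightarrow> nat" and I :: "nat set"
  assumes "r \<ge> 2" and "n \<ge> 1" and "k \<ge> 1"
    and "\<forall>i\<in>{1..n}. s i \<le> r - 1"
    and "I \<subseteq> {i\<in>{1..n}. s i > 0}"
    and "card I \<ge> k"
  shows "geom_real (induced_subcomplex (C_complex r s n (replicate r k))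
             {As \<in> C_vertices r s n (replicate r k). I \<subseteq> As ! 0})
         homotopy_equivalent_space
         geom_real (C_complex (r - 1) (\<lambda>i. if i \<in> I then s i - 1 else s i) n (replicate (r - 1) k))"
proof -
  obtain m where r: "r = Suc m"
    using \<open>r \<ge> 2\<close> by (metis Suc_le_D add_leD2 numeral_2_eq_2 plus_1_eq_Suc)
  have "replicate r k = k # replicate m k" "r - 1 = m"
    by (simp_all add: r)
  then show ?thesis
    using homotopy_equivalent_space_C_complex_first_contains[of n s m I k "replicate m k"] assms
    by (simp add: r)
qed

end
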